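(* (a) For all flow graphs $h_1,h_2$ over a flow monoid with $h_1.X=h_2.X$ and $h_1.\mathit{in}=h_2.\mathit{in}$: $\mathrm{FP}(h_1,h_2)\neq\emptyset$ if and only if $h_1.X\in\mathrm{FP}(h_1,h_2)$. (b) Flow footprints are not closed under intersection and need not have a unique inclusion-minimal element: there exist such flow graphs $h_1,h_2$ and sets $Y_1,Y_2\in\mathrm{FP}(h_1,h_2)$ with $Y_1\cap Y_2\notin\mathrm{FP}(h_1,h_2)$.
   Context: A flow monoid is a commutative monoid $(\mathbb{M},+,0)$ such that $n\le m :\iff \exists o.\ m=n+o$ is a partial order in which every ascending chain $K$ has a least upper bound $\bigsqcup K$, and $n+\bigsqcup K=\bigsqcup(n+K)$. $\mathcal{C}(\mathbb{M}\to\mathbb{M})$ is the set of functions commuting with least upper bounds of ascending chains. Infinite sums denote least upper bounds of finite partial sums. A flow graph is $h=(X,E,\mathit{in})$ with $X\subseteq\mathbb{N}$ finite, $E:X\times\mathbb{N}\to\mathcal{C}(\mathbb{M}\to\mathbb{M})$, $\mathit{in}:(\mathbb{N}\setminus X)\times X\to\mathbb{M}$; $\mathit{in}_x=\sum_{y\in\mathbb{N}\setminus X}\mathit{in}(y,x)$; the flow $h.\mathit{flow}$ is the least $\mathit{flow}:X\to\mathbb{M}$ with $\mathit{flow}(x)=\mathit{in}_x+\sum_{y\in X}E(y,x)(\mathit{flow}(y))$; the outflow is $h.\mathit{out}(x,y)=E(x,y)(h.\mathit{flow}(x))$ for $x\in X$, $y\notin X$. Transfer function: $\mathsf{tf}(h)(\mathit{in}')$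 is the outflow of $(X,E,\mathit{in}')$. $\mathsf{tf}(h_1)=_{\mathit{in}}\mathsf{tf}(h_2)$ means equality on all inflows $\mathit{in}'\le\mathit{in}$ (pointwise). Contextual equivalence $h_1\approx h_2$: $h_1.X=h_2.X$, $h_1.\mathit{in}=h_2.\mathit{in}$, $\mathsf{tf}(h_1)=_{h_1.\mathit{in}}\mathsf{tf}(h_2)$. Restriction: for $Y\subseteq\mathbb{N}$, $h|_Y=(X\cap Y,\ E|_{(X\cap Y)\times\mathbb{N}},\ \mathit{in}')$ with $\mathit{in}'(z,y)=\mathit{in}(z,y)$ for $z\notin X$, $y\in X\cap Y$, and $\mathit{in}'(x,y)=E(x,y)(h.\mathit{flow}(x))$ for $x\in X\setminus Y$, $y\in X\cap Y$. Footprints: for $h_1,h_2$ with $X=h_1.X=h_2.X$ and $h_1.\mathit{in}=h_2.\mathit{in}$, $\mathrm{FP}(h_1,h_2)$ is the set of $Y\subseteq X$ such that $h_1|_Y\approx h_2|_Y$ and $h_1|_{X\setminus Y}=h_2|_{X\setminus Y}$. *)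

theory Defs
  imports Main "HOL-Library.Extended_Nat"
begin

definition fm_le :: "'m::comm_monoid_add \<Rightarrow> 'm \<Rightarrow> bool" where
  "fm_le n m \<longleftrightarrow> (\<exists>k. m = n + k)"

definition fm_is_lub :: "'m::comm_monoid_add set \<Rightarrow> 'm \<Rightarrow> bool" where
  "fm_is_lub S l \<longleftrightarrow> (\<forall>s\<in>S. fm_le s l) \<and> (\<forall>u. (\<forall>s\<in>S. fm_le s u) \<longrightarrow> fm_le l u)"

definition fm_asc :: "(nat \<Rightarrow> 'm::comm_monoid_add) \<Rightarrow> bool" where
  "fm_asc K \<longleftrightarrow> (\<forall>i. fm_le (K i) (K (Suc i)))"

definition fm_lub :: "(nat \<Rightarrow> 'm::comm_monoid_add) \<Rightarrow> 'm" where
  "fm_lub K = (THE l. fm_is_lub (range K) l)"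

definition flow_monoid :: "'m::comm_monoid_add itself \<Rightarrow> bool" where
  "flow_monoid _ \<longleftrightarrow>
     (\<forall>n m :: 'm. fm_le n m \<longrightarrow> fm_le m n \<longrightarrow> n = m) \<and>
     (\<forall>K :: nat \<Rightarrow> 'm. fm_asc K \<longrightarrow> (\<exists>l. fm_is_lub (range K) l)) \<and>
     (\<forall>(K :: nat \<Rightarrow> 'm) n. fm_asc K \<longrightarrow> n + fm_lub K = fm_lub (\<lambda>i. n + K i))"

definition fm_cont :: "('m::comm_monoid_add \<Rightarrow> 'm) \<Rightarrow> bool" where
  "fm_cont f \<longleftrightarrow> (\<forall>K. fm_asc K \<longrightarrow> fm_is_lub (range (\<lambda>i. f (K i))) (f (fm_lub K)))"

definition fm_infsum :: "(nat \<Rightarrow> 'm::comm_monoid_add) \<Rightarrow> nat set \<Rightarrow> 'm" where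
  "fm_infsum f A = fm_lub (\<lambda>n. \<Sum>y\<in>A \<inter> {..<n}. f y)"

text \<open>A flow graph (X, E, in).  Only the values of E on X x nat and of in on
  (nat - X) x X are meaningful; all notions below only inspect those values.\<close>
record 'm fgraph =
  fX :: "nat set"
  fE :: "nat \<Rightarrow> nat \<Rightarrow> 'm \<Rightarrow> 'm"
  fin :: "nat \<Rightarrow> nat \<Rightarrow> 'm"

definition fg_wf :: "'m::comm_monoid_add fgraph \<Rightarrow> bool" where
  "fg_wf h \<longleftrightarrow> finite (fX h) \<and> (\<forall>x\<in>fX h. \<forall>y. fm_cont (fE h x y))"

definition fg_inx :: "'m::comm_monoid_add fgraph \<Rightarrow> nat \<Rightarrow> 'm" where
  "fg_inx h x = fm_infsum (\<lambda>y. fin h y x) (- fX h)"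

definition fg_is_flow :: "'m::comm_monoid_add fgraph \<Rightarrow> (nat \<Rightarrow> 'm) \<Rightarrow> bool" where
  "fg_is_flow h f \<longleftrightarrow>
     (\<forall>x\<in>fX h. f x = fg_inx h x + (\<Sum>y\<in>fX h. fE h y x (f y)))"

definition fg_flow :: "'m::comm_monoid_add fgraph \<Rightarrow> nat \<Rightarrow> 'm" where
  "fg_flow h = (THE f. fg_is_flow h f
       \<and> (\<forall>g. fg_is_flow h g \<longrightarrow> (\<forall>x\<in>fX h. fm_le (f x) (g x)))
       \<and> (\<forall>x. x \<notin> fX h \<longrightarrow> f x = 0))"

text \<open>Outflow, meaningful for x in X and y not in X.\<close>
definition fg_out :: "'m::comm_monoid_add fgraph \<Rightarrow> nat \<Rightarrow> nat \<Rightarrow> 'm" where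
  "fg_out h x y = fE h x y (fg_flow h x)"

definition fg_tf :: "'m::comm_monoid_add fgraph \<Rightarrow> (nat \<Rightarrow> nat \<Rightarrow> 'm) \<Rightarrow> nat \<Rightarrow> nat \<Rightarrow> 'm" where
  "fg_tf h inn = fg_out (h\<lparr>fin := inn\<rparr>)"

definition fg_in_eq :: "nat set \<Rightarrow> (nat \<Rightarrow> nat \<Rightarrow> 'm) \<Rightarrow> (nat \<Rightarrow> nat \<Rightarrow> 'm) \<Rightarrow> bool" where
  "fg_in_eq X i1 i2 \<longleftrightarrow> (\<forall>z. z \<notin> X \<longrightarrow> (\<forall>y\<in>X. i1 z y = i2 z y))"

definition fg_tf_eq_upto :: "nat set \<Rightarrow> 'm::comm_monoid_add fgraph \<Rightarrow> 'm fgraph \<Rightarrow> (nat \<Rightarrow> nat \<Rightarrow> 'm) \<Rightarrow> bool" where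
  "fg_tf_eq_upto X h1 h2 inn \<longleftrightarrow>
     (\<forall>inn'. (\<forall>z. z \<notin> X \<longrightarrow> (\<forall>y\<in>X. fm_le (inn' z y) (inn z y))) \<longrightarrow>
        (\<forall>x\<in>X. \<forall>y. y \<notin> X \<longrightarrow> fg_tf h1 inn' x y = fg_tf h2 inn' x y))"

definition fg_approx :: "'m::comm_monoid_add fgraph \<Rightarrow> 'm fgraph \<Rightarrow> bool" where
  "fg_approx h1 h2 \<longleftrightarrow> fX h1 = fX h2 \<and> fg_in_eq (fX h1) (fin h1) (fin h2)
       \<and> fg_tf_eq_upto (fX h1) h1 h2 (fin h1)"

text \<open>Equality of flow graphs (as triples with E : X x nat -> C and in : (nat - X) x X -> M).\<close>
definition fg_eq :: "'m::comm_monoid_add fgraph \<Rightarrow> 'm fgraph \<Rightarrow> bool" where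
  "fg_eq h1 h2 \<longleftrightarrow> fX h1 = fX h2 \<and> (\<forall>x\<in>fX h1. \<forall>y. fE h1 x y = fE h2 x y)
       \<and> fg_in_eq (fX h1) (fin h1) (fin h2)"

definition fg_restr :: "'m::comm_monoid_add fgraph \<Rightarrow> nat set \<Rightarrow> 'm fgraph" where
  "fg_restr h Y = \<lparr> fX = fX h \<inter> Y, fE = fE h,
     fin = (\<lambda>z y. if z \<in> fX h then fE h z y (fg_flow h z) else fin h z y) \<rparr>"

definition fg_FP :: "'m::comm_monoid_add fgraph \<Rightarrow> 'm fgraph \<Rightarrow> nat set set" where
  "fg_FP h1 h2 = {Y. Y \<subseteq> fX h1 \<and> fg_approx (fg_restr h1 Y) (fg_restr h2 Y)
       \<and> fg_eq (fg_restr h1 (fX h1 - Y)) (fg_restr h2 (fX h1 - Y))}"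

end

theory Submission
  imports Defs
begin

text \<open>(a) Let Y be a footprint and let in' be an inflow below in. The flow of h1 is monotone
  in the inflow, so the inflow that h1 with inflow in' sends into Y is below the inflow of h1|Y;
  contextual equivalence then makes the region Y of h2, fed with that inflow, emit the same
  outflow as the region Y of h1. Pasting its flow with the flow of h1 outside Y solves the flow
  equation of h2, so the flow of h2 is below that of h1 outside Y. By symmetry the two flows agree
  there, where the graphs have the same edges, hence also inside Y, and h1 and h2 have the same
  outflow for every inflow below in: the whole node set is a footprint.

  (b) Over the extended naturals let nodes 1 and 2 each send the constant 1 to node 0, and let
  the only edge leaving the graph, from 0 to 3, be the identity in h1 and v \<mapsto> max v 1 in h2.
  Every footprint contains 0; the sets {0, 1} and {0, 2} are footprints, since node 0 receives 1
  from inside them, but their intersection {0} is not.\<close>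

lemma fm_le_refl [simp]: "fm_le (a::'m::comm_monoid_add) a"
  unfolding fm_le_def by (metis add_0_right)

lemma fm_le_zero: "fm_le 0 (a::'m::comm_monoid_add)"
  unfolding fm_le_def by simp

lemma fm_le_trans [trans]: "fm_le (a::'m::comm_monoid_add) b \<Longrightarrow> fm_le b c \<Longrightarrow> fm_le a c"
  unfolding fm_le_def by (metis add.assoc)

lemma fm_le_add: "fm_le (a::'m::comm_monoid_add) b \<Longrightarrow> fm_le c d \<Longrightarrow> fm_le (a + c) (b + d)"
  unfolding fm_le_def by (metis add.assoc add.commute)

lemma fm_le_add_left: "fm_le (b::'m::comm_monoid_add) (a + b)"
  unfolding fm_le_def by (metis add.commute)

lemma fm_sum_mono:
  "(\<And>x. x \<in> A \<Longrightarrow> fm_le (f x) (g x)) \<Longrightarrow> fm_le (sum f A) (sum (g::_ \<Rightarrow> 'm::comm_monoid_add) A)"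
  by (induction A rule: infinite_finite_induct) (simp_all add: fm_le_add)

lemma fm_sum_mono_subset:
  "finite B \<Longrightarrow> A \<subseteq> B \<Longrightarrow> fm_le (sum f A) (sum (f::_ \<Rightarrow> 'm::comm_monoid_add) B)"
  by (metis fm_le_add_left sum.subset_diff)

lemma fg_flow_cong:
  assumes "fX h = fX h'"
    and "\<And>x y. x \<in> fX h \<Longrightarrow> y \<in> fX h \<Longrightarrow> fE h x y = fE h' x y"
    and "\<And>z y. z \<notin> fX h \<Longrightarrow> y \<in> fX h \<Longrightarrow> fin h z y = fin h' z y"
  shows "fg_flow h = fg_flow h'"
proof -
  have "fg_inx h x = fg_inx h' x" if "x \<in> fX h" for x
    unfolding fg_inx_def fm_infsum_def using assms that
    by (intro arg_cong[where f = fm_lub] ext sum.cong) auto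
  then have "fg_is_flow h = fg_is_flow h'"
    unfolding fg_is_flow_def fun_eq_iff using assms by (metis (no_types, lifting) sum.cong)
  then show ?thesis
    unfolding fg_flow_def using assms(1) by simp
qed

lemma fg_wf_fin_upd [simp]: "fg_wf (h\<lparr>fin := i\<rparr>) = fg_wf h"
  by (simp add: fg_wf_def)

lemma fg_wf_restr: "fg_wf h \<Longrightarrow> fg_wf (fg_restr h Y)"
  by (simp add: fg_wf_def fg_restr_def)

lemma fg_restr_simps [simp]:
  "fX (fg_restr h Y) = fX h \<inter> Y"
  "fE (fg_restr h Y) = fE h"
  "fin (fg_restr h Y) = (\<lambda>z y. if z \<in> fX h then fE h z y (fg_flow h z) else fin h z y)"
  by (simp_all add: fg_restr_def)

lemma fg_tf_restr:
  "fg_tf (fg_restr h Y) i x w = fE h x w (fg_flow \<lparr>fX = fX h \<inter> Y, fE = fE h, fin = i\<rparr> x)"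
  by (simp add: fg_tf_def fg_out_def fg_restr_def)

lemma fg_restr_fin_upd:
  "(fg_restr h Y)\<lparr>fin := fin (fg_restr (h\<lparr>fin := i\<rparr>) Y)\<rparr> = fg_restr (h\<lparr>fin := i\<rparr>) Y"
  by (simp add: fg_restr_def)

lemma fg_tf_restr_full: "fg_tf (fg_restr h (fX h)) i x w = fE h x w (fg_flow (h\<lparr>fin := i\<rparr>) x)"
  by (cases h) (simp add: fg_tf_restr)

lemma fg_approx_sym: "fg_approx h1 h2 \<Longrightarrow> fg_approx h2 h1"
  unfolding fg_approx_def fg_in_eq_def fg_tf_eq_upto_def by simp

lemma fg_eq_sym: "fg_eq h1 h2 \<Longrightarrow> fg_eq h2 h1"
  unfolding fg_eq_def fg_in_eq_def by simp

lemma fg_FP_subset: "Y \<in> fg_FP h1 h2 \<Longrightarrow> Y \<subseteq> fX h1"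
  by (simp add: fg_FP_def)

lemma fg_FP_edges_eq: "Y \<in> fg_FP h1 h2 \<Longrightarrow> x \<in> fX h1 - Y \<Longrightarrow> fE h1 x y = fE h2 x y"
  by (auto simp: fg_FP_def fg_eq_def)

lemma fg_FP_tf_eq:
  assumes "Y \<in> fg_FP h1 h2"
    and "\<And>z y. z \<notin> Y \<Longrightarrow> y \<in> Y \<Longrightarrow> fm_le (j z y) (fin (fg_restr h1 Y) z y)"
    and "x \<in> Y" and "w \<notin> Y"
  shows "fg_tf (fg_restr h1 Y) j x w = fg_tf (fg_restr h2 Y) j x w"
proof -
  have "fX (fg_restr h1 Y) = Y"
    using assms(1) by (auto simp: fg_FP_def)
  moreover have "fg_tf_eq_upto (fX (fg_restr h1 Y)) (fg_restr h1 Y) (fg_restr h2 Y) (fin (fg_restr h1 Y))"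
    using assms(1) unfolding fg_FP_def fg_approx_def by blast
  ultimately show ?thesis
    using assms(2-4) unfolding fg_tf_eq_upto_def by blast
qed

lemma fg_FP_sym: "fX h1 = fX h2 \<Longrightarrow> fg_FP h1 h2 = fg_FP h2 h1"
  unfolding fg_FP_def by (auto intro: fg_approx_sym fg_eq_sym)

context
  fixes T :: "'m::comm_monoid_add itself"
  assumes flow_monoid: "flow_monoid TYPE('m)"
begin

lemma fm_antisym: "fm_le (a::'m) b \<Longrightarrow> fm_le b a \<Longrightarrow> a = b"
  using flow_monoid unfolding flow_monoid_def by blast

lemma fm_lub_eqI: "fm_is_lub (range K) (l::'m) \<Longrightarrow> fm_lub K = l"
  unfolding fm_lub_def fm_is_lub_def by (rule the_equality) (blast intro: fm_antisym)+

lemma fm_lub_is_lub: "fm_asc (K::nat \<Rightarrow> 'm) \<Longrightarrow> fm_is_lub (range K) (fm_lub K)"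
  using flow_monoid fm_lub_eqI unfolding flow_monoid_def by blast

lemma fm_lub_upper: "fm_asc (K::nat \<Rightarrow> 'm) \<Longrightarrow> fm_le (K i) (fm_lub K)"
  using fm_lub_is_lub unfolding fm_is_lub_def by blast

lemma fm_lub_least: "fm_asc (K::nat \<Rightarrow> 'm) \<Longrightarrow> (\<And>i. fm_le (K i) u) \<Longrightarrow> fm_le (fm_lub K) u"
  using fm_lub_is_lub unfolding fm_is_lub_def by blast

lemma fm_add_lub: "fm_asc (K::nat \<Rightarrow> 'm) \<Longrightarrow> n + fm_lub K = fm_lub (\<lambda>i. n + K i)"
  using flow_monoid unfolding flow_monoid_def by blast

lemma fm_asc_mono: "fm_asc (K::nat \<Rightarrow> 'm) \<Longrightarrow> i \<le> j \<Longrightarrow> fm_le (K i) (K j)"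
proof (induction j)
  case (Suc j)
  then show ?case
    unfolding fm_asc_def by (metis fm_le_refl fm_le_trans le_Suc_eq)
qed simp

lemma fm_lub_const [simp]: "fm_lub (\<lambda>i. c::'m) = c"
  by (rule fm_lub_eqI) (auto simp: fm_is_lub_def)

lemma fm_asc_add_const: "fm_asc (K::nat \<Rightarrow> 'm) \<Longrightarrow> fm_asc (\<lambda>i. n + K i)"
  unfolding fm_asc_def by (simp add: fm_le_add)

lemma fm_asc_sum: "(\<And>a. a \<in> A \<Longrightarrow> fm_asc (K a :: nat \<Rightarrow> 'm)) \<Longrightarrow> fm_asc (\<lambda>i. \<Sum>a\<in>A. K a i)"
  unfolding fm_asc_def by (auto intro!: fm_sum_mono)

lemma fm_lub_mono:
  "fm_asc (K::nat \<Rightarrow> 'm) \<Longrightarrow> fm_asc L \<Longrightarrow> (\<And>i. fm_le (K i) (L i)) \<Longrightarrow> fm_le (fm_lub K) (fm_lub L)"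
  by (meson fm_le_trans fm_lub_least fm_lub_upper)

lemma fm_lub_shift:
  assumes K: "fm_asc (K::nat \<Rightarrow> 'm)"
  shows "fm_lub (\<lambda>i. K (i + N)) = fm_lub K"
proof (rule fm_antisym)
  have KN: "fm_asc (\<lambda>i. K (i + N))"
    using K unfolding fm_asc_def by simp
  show "fm_le (fm_lub (\<lambda>i. K (i + N))) (fm_lub K)"
    using K KN by (intro fm_lub_least fm_lub_upper)
  have "fm_le (K i) (fm_lub (\<lambda>i. K (i + N)))" for i
    using fm_asc_mono[OF K le_add1] fm_lub_upper[OF KN] by (rule fm_le_trans)
  then show "fm_le (fm_lub K) (fm_lub (\<lambda>i. K (i + N)))"
    using K by (rule fm_lub_least[rotated])
qed

lemma fm_lub_eventually_eq:
  assumes "fm_asc (K::nat \<Rightarrow> 'm)" "fm_asc L" "\<And>i. i \<ge> N \<Longrightarrow> K i = L i"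
  shows "fm_lub K = fm_lub L"
  using fm_lub_shift[of K N] fm_lub_shift[of L N] assms by simp

lemma fm_lub_add:
  assumes K: "fm_asc (K::nat \<Rightarrow> 'm)" and L: "fm_asc L"
  shows "fm_lub (\<lambda>i. K i + L i) = fm_lub K + fm_lub L"
proof (rule fm_antisym)
  have KL: "fm_asc (\<lambda>i. K i + L i)"
    using K L unfolding fm_asc_def by (simp add: fm_le_add)
  show "fm_le (fm_lub (\<lambda>i. K i + L i)) (fm_lub K + fm_lub L)"
    using K L KL by (intro fm_lub_least fm_le_add fm_lub_upper)
  have "fm_le (L i + K j) (fm_lub (\<lambda>i. K i + L i))" for i j
  proof -
    have "fm_le (L i + K j) (K (max i j) + L (max i j))"
      using fm_asc_mono[OF K, of j] fm_asc_mono[OF L, of i] by (simp add: add.commute fm_le_add)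
    also have "fm_le \<dots> (fm_lub (\<lambda>i. K i + L i))"
      using KL by (rule fm_lub_upper)
    finally show ?thesis .
  qed
  then have "fm_le (fm_lub K + L i) (fm_lub (\<lambda>i. K i + L i))" for i
    using K by (simp add: add.commute[of "fm_lub K"] fm_add_lub fm_asc_add_const fm_lub_least)
  then show "fm_le (fm_lub K + fm_lub L) (fm_lub (\<lambda>i. K i + L i))"
    using L by (simp add: fm_add_lub fm_asc_add_const fm_lub_least)
qed

lemma fm_lub_sum:
  "finite A \<Longrightarrow> (\<And>a. a \<in> A \<Longrightarrow> fm_asc (K a :: nat \<Rightarrow> 'm)) \<Longrightarrow>
   fm_lub (\<lambda>i. \<Sum>a\<in>A. K a i) = (\<Sum>a\<in>A. fm_lub (K a))"
  by (induction A rule: finite_induct) (simp_all add: fm_lub_add fm_asc_sum)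

lemma fm_cont_mono:
  assumes f: "fm_cont (f::'m \<Rightarrow> 'm)" and ab: "fm_le a b"
  shows "fm_le (f a) (f b)"
proof -
  define K where "K = (\<lambda>i::nat. if i = 0 then a else b)"
  have K: "fm_asc K"
    using ab unfolding K_def fm_asc_def by auto
  have "fm_lub K = b"
    using ab by (intro fm_lub_eqI) (auto simp: fm_is_lub_def K_def)
  moreover have "fm_is_lub (range (\<lambda>i. f (K i))) (f (fm_lub K))"
    using f K unfolding fm_cont_def by blast
  ultimately have "fm_le (f (K 0)) (f b)"
    unfolding fm_is_lub_def by simp
  then show ?thesis
    by (simp add: K_def)
qed

lemma fm_cont_asc: "fm_cont (f::'m \<Rightarrow> 'm) \<Longrightarrow> fm_asc K \<Longrightarrow> fm_asc (\<lambda>i. f (K i))"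
  unfolding fm_asc_def by (simp add: fm_cont_mono)

lemma fm_cont_lub: "fm_cont (f::'m \<Rightarrow> 'm) \<Longrightarrow> fm_asc K \<Longrightarrow> f (fm_lub K) = fm_lub (\<lambda>i. f (K i))"
  unfolding fm_cont_def by (simp add: fm_lub_eqI[symmetric])

lemma fm_partial_sums_asc: "fm_asc (\<lambda>n. \<Sum>y\<in>A \<inter> {..<n}. (f y::'m))"
  unfolding fm_asc_def by (auto intro!: fm_sum_mono_subset)

lemma fm_infsum_mono:
  "(\<And>a. a \<in> A \<Longrightarrow> fm_le (f a) (g a)) \<Longrightarrow> fm_le (fm_infsum f A) (fm_infsum (g::_ \<Rightarrow> 'm) A)"
  unfolding fm_infsum_def by (auto intro!: fm_lub_mono fm_partial_sums_asc fm_sum_mono)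

lemma fm_infsum_cong: "(\<And>a. a \<in> A \<Longrightarrow> f a = g a) \<Longrightarrow> fm_infsum f A = fm_infsum (g::_ \<Rightarrow> 'm) A"
  unfolding fm_infsum_def by (auto intro!: arg_cong[where f = fm_lub] sum.cong)

lemma fm_infsum_union_finite:
  assumes D: "finite D" and disj: "A \<inter> D = {}"
  shows "fm_infsum f (A \<union> D) = fm_infsum f A + sum (f::_ \<Rightarrow> 'm) D"
proof -
  obtain N where N: "D \<subseteq> {..<N}"
    using D finite_nat_bounded by blast
  have "(\<Sum>y\<in>(A \<union> D) \<inter> {..<i}. f y) = sum f D + (\<Sum>y\<in>A \<inter> {..<i}. f y)" if "N \<le> i" for i
  proof -
    have "(A \<union> D) \<inter> {..<i} = A \<inter> {..<i} \<union> D"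
      using N that by auto
    moreover have "sum f (A \<inter> {..<i} \<union> D) = sum f (A \<inter> {..<i}) + sum f D"
      using D disj by (intro sum.union_disjoint) auto
    ultimately show ?thesis
      by (simp add: add.commute)
  qed
  then have "fm_infsum f (A \<union> D) = fm_lub (\<lambda>n. sum f D + (\<Sum>y\<in>A \<inter> {..<n}. f y))"
    unfolding fm_infsum_def
    by (intro fm_lub_eventually_eq fm_partial_sums_asc fm_asc_add_const) auto
  then show ?thesis
    unfolding fm_infsum_def by (simp add: fm_add_lub fm_partial_sums_asc add.commute)
qed

definition fg_step :: "'m::comm_monoid_add fgraph \<Rightarrow> (nat \<Rightarrow> 'm) \<Rightarrow> nat \<Rightarrow> 'm" where
  "fg_step h f = (\<lambda>x. if x \<in> fX h then fg_inx h x + (\<Sum>y\<in>fX h. fE h y x (f y)) else 0)"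

definition fg_iter :: "'m::comm_monoid_add fgraph \<Rightarrow> nat \<Rightarrow> nat \<Rightarrow> 'm" where
  "fg_iter h n = (fg_step h ^^ n) (\<lambda>_. 0)"

definition fg_kleene :: "'m::comm_monoid_add fgraph \<Rightarrow> nat \<Rightarrow> 'm" where
  "fg_kleene h = (\<lambda>x. if x \<in> fX h then fm_lub (\<lambda>n. fg_iter h n x) else 0)"

lemma fg_iter_0 [simp]: "fg_iter h 0 = (\<lambda>_. 0)"
  by (simp add: fg_iter_def)

lemma fg_iter_Suc [simp]: "fg_iter h (Suc n) = fg_step h (fg_iter h n)"
  by (simp add: fg_iter_def)

lemma fg_is_flow_iff_step: "fg_is_flow h g \<longleftrightarrow> (\<forall>x\<in>fX h. fg_step h g x = g x)"
  unfolding fg_is_flow_def fg_step_def by auto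

context
  fixes h :: "'m fgraph"
  assumes wf: "fg_wf h"
begin

lemma fg_step_mono:
  assumes "\<And>x. x \<in> fX h \<Longrightarrow> fm_le (f x) (g x)"
  shows "fm_le (fg_step h f x) (fg_step h g x)"
proof -
  have "fm_le (fE h y x (f y)) (fE h y x (g y))" if "y \<in> fX h" for y
    using wf assms that fm_cont_mono[of "fE h y x"] by (simp add: fg_wf_def)
  then show ?thesis
    by (simp add: fg_step_def fm_le_add fm_sum_mono)
qed

lemma fg_iter_asc: "x \<in> fX h \<Longrightarrow> fm_asc (\<lambda>n. fg_iter h n x)"
proof -
  have "\<forall>x\<in>fX h. fm_le (fg_iter h n x) (fg_iter h (Suc n) x)" for n
    by (induction n) (simp_all add: fg_step_mono fm_le_zero)
  then show "x \<in> fX h \<Longrightarrow> fm_asc (\<lambda>n. fg_iter h n x)"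
    unfolding fm_asc_def by blast
qed

lemma fg_kleene_least:
  assumes pre: "\<And>x. x \<in> fX h \<Longrightarrow> fm_le (fg_step h g x) (g x)" and x: "x \<in> fX h"
  shows "fm_le (fg_kleene h x) (g x)"
proof -
  have "\<forall>x\<in>fX h. fm_le (fg_iter h n x) (g x)" for n
  proof (induction n)
    case (Suc n)
    have "fm_le (fg_step h (fg_iter h n) x) (g x)" if "x \<in> fX h" for x
      using fg_step_mono[of "fg_iter h n" g x] Suc pre[OF that] by (blast intro: fm_le_trans)
    then show ?case
      by simp
  qed (simp add: fm_le_zero)
  then have "fm_le (fm_lub (\<lambda>n. fg_iter h n x)) (g x)"
    using x by (intro fm_lub_least fg_iter_asc) auto
  then show ?thesis
    using x by (simp add: fg_kleene_def)
qed

lemma fg_kleene_is_flow: "fg_is_flow h (fg_kleene h)"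
  unfolding fg_is_flow_def
proof
  fix x assume x: "x \<in> fX h"
  have E: "\<And>y. y \<in> fX h \<Longrightarrow> fm_asc (\<lambda>n. fE h y x (fg_iter h n y))"
    using wf by (auto simp: fg_wf_def intro: fm_cont_asc fg_iter_asc)
  have "fg_kleene h x = fm_lub (\<lambda>n. fg_iter h (Suc n) x)"
    using x fm_lub_shift[OF fg_iter_asc[OF x], of 1] by (simp add: fg_kleene_def)
  also have "\<dots> = fm_lub (\<lambda>n. fg_inx h x + (\<Sum>y\<in>fX h. fE h y x (fg_iter h n y)))"
    using x by (simp add: fg_step_def)
  also have "\<dots> = fg_inx h x + fm_lub (\<lambda>n. \<Sum>y\<in>fX h. fE h y x (fg_iter h n y))"
    using E by (intro fm_add_lub[symmetric] fm_asc_sum)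
  also have "\<dots> = fg_inx h x + (\<Sum>y\<in>fX h. fm_lub (\<lambda>n. fE h y x (fg_iter h n y)))"
    using wf E by (simp add: fm_lub_sum fg_wf_def)
  also have "\<dots> = fg_inx h x + (\<Sum>y\<in>fX h. fE h y x (fg_kleene h y))"
    using wf by (simp add: fg_kleene_def fg_wf_def fm_cont_lub fg_iter_asc)
  finally show "fg_kleene h x = fg_inx h x + (\<Sum>y\<in>fX h. fE h y x (fg_kleene h y))" .
qed

lemma fg_flow_kleene: "fg_flow h = fg_kleene h"
  unfolding fg_flow_def
proof (rule the_equality)
  show "fg_is_flow h (fg_kleene h)
      \<and> (\<forall>g. fg_is_flow h g \<longrightarrow> (\<forall>x\<in>fX h. fm_le (fg_kleene h x) (g x)))
      \<and> (\<forall>x. x \<notin> fX h \<longrightarrow> fg_kleene h x = 0)"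
    using fg_kleene_is_flow fg_kleene_least by (auto simp: fg_is_flow_iff_step fg_kleene_def)
next
  fix f
  assume f: "fg_is_flow h f \<and> (\<forall>g. fg_is_flow h g \<longrightarrow> (\<forall>x\<in>fX h. fm_le (f x) (g x)))
      \<and> (\<forall>x. x \<notin> fX h \<longrightarrow> f x = 0)"
  have "f x = fg_kleene h x" if "x \<in> fX h" for x
    using f that fg_kleene_is_flow fg_kleene_least[of f x]
    by (auto simp: fg_is_flow_iff_step intro: fm_antisym)
  with f show "f = fg_kleene h"
    by (auto simp: fg_kleene_def)
qed

lemma fg_flow_eq: "x \<in> fX h \<Longrightarrow> fg_flow h x = fg_inx h x + (\<Sum>y\<in>fX h. fE h y x (fg_flow h y))"
  using fg_kleene_is_flow unfolding fg_flow_kleene fg_is_flow_def by blast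

lemma fg_flow_least:
  assumes "\<And>x. x \<in> fX h \<Longrightarrow> fm_le (fg_inx h x + (\<Sum>y\<in>fX h. fE h y x (g y))) (g x)" and "x \<in> fX h"
  shows "fm_le (fg_flow h x) (g x)"
  using assms fg_kleene_least unfolding fg_flow_kleene by (simp add: fg_step_def)

end

lemma fg_flow_mono_fin:
  fixes h :: "'m fgraph"
  assumes wf: "fg_wf h" and below: "\<And>z y. z \<notin> fX h \<Longrightarrow> y \<in> fX h \<Longrightarrow> fm_le (i z y) (fin h z y)"
    and x: "x \<in> fX h"
  shows "fm_le (fg_flow (h\<lparr>fin := i\<rparr>) x) (fg_flow h x)"
proof (rule fg_flow_least)
  fix x assume x: "x \<in> fX (h\<lparr>fin := i\<rparr>)"
  have "fm_le (fg_inx (h\<lparr>fin := i\<rparr>) x) (fg_inx h x)"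
    unfolding fg_inx_def using x below by (auto intro!: fm_infsum_mono)
  then show "fm_le (fg_inx (h\<lparr>fin := i\<rparr>) x + (\<Sum>y\<in>fX (h\<lparr>fin := i\<rparr>). fE (h\<lparr>fin := i\<rparr>) y x (fg_flow h y)))
      (fg_flow h x)"
    using x fg_flow_eq[OF wf, of x] by (simp add: fm_le_add)
qed (use wf x in simp_all)

lemma fg_inx_restr:
  fixes h :: "'m fgraph"
  assumes fin: "finite (fX h)" and Y: "Y \<subseteq> fX h" and x: "x \<in> Y"
  shows "fg_inx (fg_restr h Y) x = fg_inx h x + (\<Sum>z\<in>fX h - Y. fE h z x (fg_flow h z))"
proof -
  let ?f = "\<lambda>z. fin (fg_restr h Y) z x"
  have "- (fX h \<inter> Y) = - fX h \<union> (fX h - Y)"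
    using Y by auto
  then have "fg_inx (fg_restr h Y) x = fm_infsum ?f (- fX h \<union> (fX h - Y))"
    unfolding fg_inx_def by (simp only: fg_restr_simps)
  also have "\<dots> = fm_infsum ?f (- fX h) + sum ?f (fX h - Y)"
    by (rule fm_infsum_union_finite) (use fin in auto)
  also have "fm_infsum ?f (- fX h) = fg_inx h x"
    unfolding fg_inx_def by (rule fm_infsum_cong) simp
  also have "sum ?f (fX h - Y) = (\<Sum>z\<in>fX h - Y. fE h z x (fg_flow h z))"
    by (rule sum.cong) auto
  finally show ?thesis .
qed

lemma fg_flow_restr:
  fixes h :: "'m fgraph"
  assumes wf: "fg_wf h" and Y: "Y \<subseteq> fX h" and y: "y \<in> Y"
  shows "fg_flow (fg_restr h Y) y = fg_flow h y"
proof -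
  let ?R = "fg_restr h Y" and ?F = "fg_flow h"
  have fin: "finite (fX h)" and XY: "fX h \<inter> Y = Y"
    using wf Y by (auto simp: fg_wf_def)
  have wfR: "fg_wf ?R"
    using wf by (rule fg_wf_restr)
  have split: "(\<Sum>z\<in>fX h. g z) = (\<Sum>z\<in>fX h - Y. g z) + (\<Sum>z\<in>Y. g z)" for g :: "nat \<Rightarrow> 'm"
    using sum.subset_diff[OF Y fin] by simp
  have inx_R: "fg_inx ?R x + (\<Sum>z\<in>Y. fE h z x (g z))
      = fg_inx h x + ((\<Sum>z\<in>fX h - Y. fE h z x (?F z)) + (\<Sum>z\<in>Y. fE h z x (g z)))"
    if "x \<in> Y" for x g
    using fg_inx_restr[OF fin Y that] by (simp add: add.assoc)
  have F_R: "fg_inx ?R x + (\<Sum>z\<in>Y. fE h z x (?F z)) = ?F x" if "x \<in> Y" for x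
    using that Y by (simp add: inx_R split[symmetric] fg_flow_eq[OF wf, of x] subsetD)
  have R_le: "fm_le (fg_flow ?R x) (?F x)" if "x \<in> Y" for x
    using that by (intro fg_flow_least[OF wfR]) (simp_all add: XY F_R)
  txt \<open>Replacing the flow of h on Y by that of h|Y gives a pre-fixpoint of the flow
    equation of h, hence the converse inequality.\<close>
  define G where "G z = (if z \<in> Y then fg_flow ?R z else ?F z)" for z
  have "fm_le (fg_inx h x + (\<Sum>z\<in>fX h. fE h z x (G z))) (G x)" if x: "x \<in> fX h" for x
  proof -
    have G_split: "(\<Sum>z\<in>fX h. fE h z x (G z))
        = (\<Sum>z\<in>fX h - Y. fE h z x (?F z)) + (\<Sum>z\<in>Y. fE h z x (fg_flow ?R z))"
      unfolding split by (simp add: G_def)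
    show ?thesis
    proof (cases "x \<in> Y")
      case True
      then show ?thesis
        using fg_flow_eq[OF wfR, of x] XY unfolding G_split by (simp add: G_def inx_R)
    next
      case False
      have "fm_le (\<Sum>z\<in>Y. fE h z x (fg_flow ?R z)) (\<Sum>z\<in>Y. fE h z x (?F z))"
        using wf Y R_le fm_cont_mono[of "fE h _ x"] by (intro fm_sum_mono) (auto simp: fg_wf_def)
      then show ?thesis
        using False x fg_flow_eq[OF wf, of x]
        unfolding G_split by (simp add: G_def split fm_le_add)
    qed
  qed
  then have "fm_le (?F y) (G y)"
    using wf Y y by (intro fg_flow_least) auto
  then show ?thesis
    using R_le[OF y] y by (simp add: G_def fm_antisym)
qed

context
  fixes h1 h2 :: "'m fgraph" and Y :: "nat set" and i :: "nat \<Rightarrow> nat \<Rightarrow> 'm"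
  assumes wf1: "fg_wf h1" and wf2: "fg_wf h2" and X12: "fX h1 = fX h2"
    and footprint: "Y \<in> fg_FP h1 h2"
    and below: "\<And>z y. z \<notin> fX h1 \<Longrightarrow> y \<in> fX h1 \<Longrightarrow> fm_le (i z y) (fin h1 z y)"
begin

lemma footprint_inflow_le:
  assumes "z \<notin> Y" and "y \<in> Y"
  shows "fm_le (fin (fg_restr (h1\<lparr>fin := i\<rparr>) Y) z y) (fin (fg_restr h1 Y) z y)"
proof (cases "z \<in> fX h1")
  case True
  then have "fm_le (fg_flow (h1\<lparr>fin := i\<rparr>) z) (fg_flow h1 z)"
    using wf1 below by (rule fg_flow_mono_fin[rotated 2])
  then show ?thesis
    using True wf1 fm_cont_mono[of "fE h1 z y"] by (simp add: fg_wf_def)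
next
  case False
  then show ?thesis
    using below assms fg_FP_subset[OF footprint] by auto
qed

lemma footprint_outflow_eq:
  assumes x: "x \<in> Y" and w: "w \<notin> Y"
  shows "fE h1 x w (fg_flow (h1\<lparr>fin := i\<rparr>) x)
    = fE h2 x w (fg_flow \<lparr>fX = Y, fE = fE h2, fin = fin (fg_restr (h1\<lparr>fin := i\<rparr>) Y)\<rparr> x)"
proof -
  let ?j = "fin (fg_restr (h1\<lparr>fin := i\<rparr>) Y)"
  have Y: "Y \<subseteq> fX h1"
    using footprint by (rule fg_FP_subset)
  have "fg_tf (fg_restr h1 Y) ?j x w = fg_out (fg_restr (h1\<lparr>fin := i\<rparr>) Y) x w"
    by (simp only: fg_tf_def fg_restr_fin_upd)
  also have "\<dots> = fE h1 x w (fg_flow (h1\<lparr>fin := i\<rparr>) x)"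
    using wf1 Y x by (simp add: fg_out_def fg_flow_restr)
  finally have "fg_tf (fg_restr h1 Y) ?j x w = fE h1 x w (fg_flow (h1\<lparr>fin := i\<rparr>) x)" .
  moreover have "fg_tf (fg_restr h2 Y) ?j x w
      = fE h2 x w (fg_flow \<lparr>fX = Y, fE = fE h2, fin = ?j\<rparr> x)"
    using Y X12 by (simp add: fg_tf_restr Int_absorb1)
  moreover have "fg_tf (fg_restr h1 Y) ?j x w = fg_tf (fg_restr h2 Y) ?j x w"
    using footprint footprint_inflow_le x w by (rule fg_FP_tf_eq)
  ultimately show ?thesis
    by simp
qed

text \<open>Pasting the flow of the region Y of h2, fed by h1, with the flow of h1 outside Y
  gives a solution of the flow equation of h2.\<close>
lemma footprint_flow_le_outside:
  assumes x: "x \<in> fX h1 - Y"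
  shows "fm_le (fg_flow (h2\<lparr>fin := i\<rparr>) x) (fg_flow (h1\<lparr>fin := i\<rparr>) x)"
proof -
  let ?g1 = "h1\<lparr>fin := i\<rparr>" and ?g2 = "h2\<lparr>fin := i\<rparr>"
  define R where "R = \<lparr>fX = Y, fE = fE h2, fin = fin (fg_restr ?g1 Y)\<rparr>"
  define H where "H z = (if z \<in> Y then fg_flow R z else fg_flow ?g1 z)" for z
  have Y: "Y \<subseteq> fX h1" and fin: "finite (fX h1)"
    using footprint wf1 by (auto simp: fg_FP_subset fg_wf_def)
  have R_simps: "fX R = Y" "fE R = fE h2"
    by (simp_all add: R_def)
  have wfR: "fg_wf R"
    using wf2 Y X12 by (auto simp: R_simps fg_wf_def intro: finite_subset)
  have split: "(\<Sum>z\<in>fX h1. g z) = (\<Sum>z\<in>fX h1 - Y. g z) + (\<Sum>z\<in>Y. g z)" for g :: "nat \<Rightarrow> 'm"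
    using sum.subset_diff[OF Y fin] by simp
  have outside: "(\<Sum>z\<in>fX h1 - Y. fE h2 z x (H z)) = (\<Sum>z\<in>fX h1 - Y. fE h1 z x (fg_flow ?g1 z))" for x
    using fg_FP_edges_eq[OF footprint] by (intro sum.cong) (auto simp: H_def)
  have inx_R: "fg_inx R x = fg_inx ?g1 x + (\<Sum>z\<in>fX h1 - Y. fE h1 z x (fg_flow ?g1 z))" if "x \<in> Y" for x
  proof -
    have "fg_inx R x = fg_inx (fg_restr ?g1 Y) x"
      using Y by (simp add: R_def fg_inx_def Int_absorb1)
    also have "\<dots> = fg_inx ?g1 x + (\<Sum>z\<in>fX h1 - Y. fE h1 z x (fg_flow ?g1 z))"
      using fg_inx_restr[of ?g1 Y x] fin Y that by simp
    finally show ?thesis .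
  qed
  have H_solves: "fg_inx ?g2 x + (\<Sum>z\<in>fX h1. fE h2 z x (H z)) = H x" if x: "x \<in> fX h1" for x
  proof -
    have inx: "fg_inx ?g2 x = fg_inx ?g1 x"
      using X12 by (simp add: fg_inx_def)
    have inside: "(\<Sum>z\<in>Y. fE h2 z x (H z)) = (\<Sum>z\<in>Y. fE h2 z x (fg_flow R z))"
      by (simp add: H_def)
    have sum_H: "fg_inx ?g2 x + (\<Sum>z\<in>fX h1. fE h2 z x (H z))
        = fg_inx ?g1 x + ((\<Sum>z\<in>fX h1 - Y. fE h1 z x (fg_flow ?g1 z)) + (\<Sum>z\<in>Y. fE h2 z x (fg_flow R z)))"
      by (simp only: inx split outside inside)
    show ?thesis
    proof (cases "x \<in> Y")
      case True
      then show ?thesis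
        using fg_flow_eq[OF wfR, of x] unfolding sum_H by (simp add: H_def inx_R R_simps add.assoc)
    next
      case False
      have "(\<Sum>z\<in>Y. fE h2 z x (fg_flow R z)) = (\<Sum>z\<in>Y. fE h1 z x (fg_flow ?g1 z))"
        using False by (intro sum.cong) (simp_all add: footprint_outflow_eq[folded R_def])
      then show ?thesis
        using False x fg_flow_eq[of ?g1 x] wf1 unfolding sum_H by (simp add: H_def split)
    qed
  qed
  have "fm_le (fg_flow ?g2 x) (H x)"
    using wf2 x X12 H_solves by (intro fg_flow_least[of ?g2 H]) auto
  then show ?thesis
    using x by (simp add: H_def)
qed

lemma footprint_flow_inside:
  assumes eq: "\<And>z. z \<in> fX h1 - Y \<Longrightarrow> fg_flow (h1\<lparr>fin := i\<rparr>) z = fg_flow (h2\<lparr>fin := i\<rparr>) z"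
    and x: "x \<in> Y"
  shows "fg_flow \<lparr>fX = Y, fE = fE h2, fin = fin (fg_restr (h1\<lparr>fin := i\<rparr>) Y)\<rparr> x
    = fg_flow (h2\<lparr>fin := i\<rparr>) x"
proof -
  have Y: "Y \<subseteq> fX h2"
    using footprint X12 by (auto dest: fg_FP_subset)
  have "fg_flow \<lparr>fX = Y, fE = fE h2, fin = fin (fg_restr (h1\<lparr>fin := i\<rparr>) Y)\<rparr>
      = fg_flow (fg_restr (h2\<lparr>fin := i\<rparr>) Y)"
    using Y eq fg_FP_edges_eq[OF footprint] X12 by (intro fg_flow_cong) auto
  then show ?thesis
    using wf2 Y x by (simp add: fg_flow_restr)
qed

end

text \<open>By symmetry both flows agree outside the footprint, where the two graphs coincide.\<close>
lemma fg_FP_outflow_eq: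
  fixes h1 h2 :: "'m fgraph"
  assumes wf1: "fg_wf h1" and wf2: "fg_wf h2" and X12: "fX h1 = fX h2"
    and in12: "fg_in_eq (fX h1) (fin h1) (fin h2)" and Y: "Y \<in> fg_FP h1 h2"
    and below: "\<And>z y. z \<notin> fX h1 \<Longrightarrow> y \<in> fX h1 \<Longrightarrow> fm_le (i z y) (fin h1 z y)"
    and x: "x \<in> fX h1" and w: "w \<notin> fX h1"
  shows "fE h1 x w (fg_flow (h1\<lparr>fin := i\<rparr>) x) = fE h2 x w (fg_flow (h2\<lparr>fin := i\<rparr>) x)"
proof -
  have Y21: "Y \<in> fg_FP h2 h1"
    using Y X12 fg_FP_sym by blast
  have below2: "fm_le (i z y) (fin h2 z y)" if "z \<notin> fX h2" "y \<in> fX h2" for z y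
    using below[of z y] in12 that X12 by (simp add: fg_in_eq_def)
  have eq: "fg_flow (h1\<lparr>fin := i\<rparr>) z = fg_flow (h2\<lparr>fin := i\<rparr>) z" if "z \<in> fX h1 - Y" for z
    using footprint_flow_le_outside[OF wf1 wf2 X12 Y below that]
      footprint_flow_le_outside[OF wf2 wf1 X12[symmetric] Y21 below2] that X12
    by (auto intro: fm_antisym)
  show ?thesis
  proof (cases "x \<in> Y")
    case True
    then show ?thesis
      using footprint_outflow_eq[OF wf1 wf2 X12 Y below True] w fg_FP_subset[OF Y]
        footprint_flow_inside[OF wf1 wf2 X12 Y below eq True] by auto
  next
    case False
    then show ?thesis
      using x eq fg_FP_edges_eq[OF Y] by simp
  qed
qed

lemma fg_FP_imp_full:
  fixes h1 h2 :: "'m fgraph"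
  assumes wf1: "fg_wf h1" and wf2: "fg_wf h2" and X12: "fX h1 = fX h2"
    and in12: "fg_in_eq (fX h1) (fin h1) (fin h2)" and Y: "Y \<in> fg_FP h1 h2"
  shows "fX h1 \<in> fg_FP h1 h2"
proof -
  have "fg_tf (fg_restr h1 (fX h1)) i x w = fg_tf (fg_restr h2 (fX h1)) i x w"
    if "\<forall>z. z \<notin> fX h1 \<longrightarrow> (\<forall>y\<in>fX h1. fm_le (i z y) (fin h1 z y))" "x \<in> fX h1" "w \<notin> fX h1"
    for i x w
  proof -
    have "fg_tf (fg_restr h1 (fX h1)) i x w = fE h1 x w (fg_flow (h1\<lparr>fin := i\<rparr>) x)"
      by (rule fg_tf_restr_full)
    also have "\<dots> = fE h2 x w (fg_flow (h2\<lparr>fin := i\<rparr>) x)"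
      using that by (intro fg_FP_outflow_eq[OF wf1 wf2 X12 in12 Y]) auto
    also have "\<dots> = fg_tf (fg_restr h2 (fX h1)) i x w"
      using X12 by (simp add: fg_tf_restr_full)
    finally show ?thesis .
  qed
  then have "fg_approx (fg_restr h1 (fX h1)) (fg_restr h2 (fX h1))"
    using X12 in12 by (simp add: fg_approx_def fg_in_eq_def fg_tf_eq_upto_def)
  then show ?thesis
    by (simp add: fg_FP_def fg_eq_def fg_in_eq_def)
qed

end


lemma fm_le_enat: "fm_le (a::enat) b \<longleftrightarrow> a \<le> b"
  unfolding fm_le_def by (simp add: le_iff_add)

lemma fm_is_lub_enat: "fm_is_lub S (l::enat) \<longleftrightarrow> l = Sup S"
  unfolding fm_is_lub_def fm_le_enat by (metis Sup_least Sup_upper order_antisym)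

lemma fm_lub_enat: "fm_lub (K :: nat \<Rightarrow> enat) = (SUP i. K i)"
  unfolding fm_lub_def fm_is_lub_enat by simp

lemma enat_add_SUP:
  fixes K :: "nat \<Rightarrow> enat"
  shows "n + (SUP i. K i) = (SUP i. n + K i)"
proof (rule order_antisym)
  show "(SUP i. n + K i) \<le> n + (SUP i. K i)"
    by (rule SUP_least) (simp add: add_left_mono SUP_upper)
  show "n + (SUP i. K i) \<le> (SUP i. n + K i)"
  proof (cases "SUP i. n + K i")
    case (enat t)
    then have bound: "n + K i \<le> enat t" for i
      by (metis SUP_upper UNIV_I)
    then obtain m where n: "n = enat m"
      by (cases n) auto
    have "K i \<le> enat (t - m)" for i
      using bound[of i] n by (cases "K i") auto
    then have "(SUP i. K i) \<le> enat (t - m)"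
      by (simp add: SUP_least)
    moreover have "m \<le> t"
      using bound[of 0] n by (cases "K 0") auto
    ultimately show ?thesis
      using n enat by (cases "SUP i. K i") auto
  qed simp
qed

lemma flow_monoid_enat: "flow_monoid TYPE(enat)"
  unfolding flow_monoid_def by (auto simp: fm_le_enat fm_is_lub_enat fm_lub_enat enat_add_SUP)

lemma fm_cont_enat_iff:
  "fm_cont (f :: enat \<Rightarrow> enat) \<longleftrightarrow> (\<forall>K. fm_asc K \<longrightarrow> f (SUP i. K i) = (SUP i. f (K i)))"
  unfolding fm_cont_def fm_is_lub_enat fm_lub_enat by simp

lemma fm_cont_enat_const: "fm_cont (\<lambda>_::enat. c::enat)"
  unfolding fm_cont_enat_iff by simp

lemma fm_cont_enat_id: "fm_cont (id :: enat \<Rightarrow> enat)"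
  unfolding fm_cont_enat_iff by (simp add: image_comp)

lemma fm_cont_enat_max: "fm_cont (\<lambda>v::enat. max v c)"
  unfolding fm_cont_enat_iff
proof (intro allI impI)
  fix K :: "nat \<Rightarrow> enat"
  show "max (SUP i. K i) c = (SUP i. max (K i) c)"
  proof (rule order_antisym)
    have "(SUP i. K i) \<le> (SUP i. max (K i) c)"
      by (rule SUP_mono) (meson max.cobounded1 UNIV_I)
    moreover have "c \<le> (SUP i. max (K i) c)"
      by (rule SUP_upper2[of 0]) auto
    ultimately show "max (SUP i. K i) c \<le> (SUP i. max (K i) c)"
      by simp
    show "(SUP i. max (K i) c) \<le> max (SUP i. K i) c"
      by (rule SUP_least) (meson SUP_upper UNIV_I max.mono order_refl)
  qed
qed

definition cex_E :: "nat \<Rightarrow> nat \<Rightarrow> enat \<Rightarrow> enat" where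
  "cex_E x y = (if (x = 1 \<or> x = 2) \<and> y = 0 then (\<lambda>_. 1) else (\<lambda>_. 0))"

definition cex_E1 :: "nat \<Rightarrow> nat \<Rightarrow> enat \<Rightarrow> enat" where
  "cex_E1 x y = (if x = 0 \<and> y = 3 then id else cex_E x y)"

definition cex_E2 :: "nat \<Rightarrow> nat \<Rightarrow> enat \<Rightarrow> enat" where
  "cex_E2 x y = (if x = 0 \<and> y = 3 then (\<lambda>v. max v 1) else cex_E x y)"

definition cex_h1 :: "enat fgraph" where
  "cex_h1 = \<lparr>fX = {0, 1, 2}, fE = cex_E1, fin = (\<lambda>_ _. 0)\<rparr>"

definition cex_h2 :: "enat fgraph" where
  "cex_h2 = \<lparr>fX = {0, 1, 2}, fE = cex_E2, fin = (\<lambda>_ _. 0)\<rparr>"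

lemma cex_h_simps [simp]:
  "fX cex_h1 = {0, 1, 2}" "fE cex_h1 = cex_E1" "fin cex_h1 = (\<lambda>_ _. 0)"
  "fX cex_h2 = {0, 1, 2}" "fE cex_h2 = cex_E2" "fin cex_h2 = (\<lambda>_ _. 0)"
  by (simp_all add: cex_h1_def cex_h2_def)

lemma cex_E12_eq: "\<not> (x = 0 \<and> y = 3) \<Longrightarrow> cex_E1 x y = cex_E2 x y"
  by (metis cex_E1_def cex_E2_def)

lemma cex_E_simps:
  "a \<in> {1, 2} \<Longrightarrow> cex_E1 a 0 = (\<lambda>_. 1)" "cex_E1 0 0 = (\<lambda>_. 0)" "cex_E2 0 0 = (\<lambda>_. 0)"
  "cex_E1 0 3 = id" "cex_E2 0 3 = (\<lambda>v. max v 1)"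
  by (auto simp: cex_E1_def cex_E2_def cex_E_def)

lemma cex_cont: "fm_cont (cex_E1 x y)" "fm_cont (cex_E2 x y)"
  by (simp_all add: cex_E1_def cex_E2_def cex_E_def fm_cont_enat_const fm_cont_enat_id fm_cont_enat_max)

lemma cex_wf: "fg_wf cex_h1" "fg_wf cex_h2"
  by (simp_all add: fg_wf_def cex_cont)

lemma cex_flow_eq: "fg_flow cex_h1 = fg_flow cex_h2"
  by (rule fg_flow_cong) (auto simp: cex_E12_eq)

lemma cex_inx_zero: "fin h = (\<lambda>_ _. 0) \<Longrightarrow> fg_inx (h :: enat fgraph) x = 0"
  by (simp add: fg_inx_def fm_infsum_def fm_lub_enat)

text \<open>Inside {0, a}, node 0 always receives 1 from node a, so max v 1 acts as the identity.\<close>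
lemma cex_FP_pair:
  assumes a: "a \<in> {1, 2}"
  shows "{0, a} \<in> fg_FP cex_h1 cex_h2"
proof -
  let ?Y = "{0, a} :: nat set"
  have XY: "{0, 1, 2} \<inter> ?Y = ?Y"
    using a by auto
  have tf: "fg_tf (fg_restr cex_h1 ?Y) i x w = fg_tf (fg_restr cex_h2 ?Y) i x w"
    if "x \<in> ?Y" "w \<notin> ?Y" for i x w
  proof -
    let ?G1 = "\<lparr>fX = ?Y, fE = cex_E1, fin = i\<rparr>" and ?G2 = "\<lparr>fX = ?Y, fE = cex_E2, fin = i\<rparr>"
    have wf: "fg_wf ?G1"
      by (simp add: fg_wf_def cex_cont)
    have flow12: "fg_flow ?G1 = fg_flow ?G2"
      using a by (intro fg_flow_cong) (auto simp: cex_E12_eq)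
    have "fg_flow ?G1 0 = fg_inx ?G1 0 + 1"
      using fg_flow_eq[OF flow_monoid_enat wf, of 0] a by (auto simp: cex_E_simps)
    then have "1 \<le> fg_flow ?G1 0"
      by simp
    then have "cex_E1 x w (fg_flow ?G1 x) = cex_E2 x w (fg_flow ?G2 x)"
      using flow12 cex_E12_eq[of x w] by (cases "x = 0 \<and> w = 3") (auto simp: cex_E_simps)
    then show ?thesis
      by (simp only: fg_tf_restr cex_h_simps XY)
  qed
  have "fg_approx (fg_restr cex_h1 ?Y) (fg_restr cex_h2 ?Y)"
    unfolding fg_approx_def fg_tf_eq_upto_def
    using a tf by (auto simp: fg_in_eq_def XY cex_E12_eq cex_flow_eq)
  moreover have "fg_eq (fg_restr cex_h1 ({0, 1, 2} - ?Y)) (fg_restr cex_h2 ({0, 1, 2} - ?Y))"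
    by (auto simp: fg_eq_def fg_in_eq_def cex_E12_eq cex_flow_eq)
  ultimately show ?thesis
    using a by (simp add: fg_FP_def)
qed

lemma cex_FP_contains_0: "Z \<in> fg_FP cex_h1 cex_h2 \<Longrightarrow> 0 \<in> Z"
  using fg_FP_edges_eq[of Z cex_h1 cex_h2 0 3] fun_cong[of id "\<lambda>v::enat. max v 1" 0]
  by (auto simp: cex_E_simps)

text \<open>With zero inflow the flow at node 0 of the region {0} is 0, which the two edges
  to node 3 map to different values.\<close>
lemma cex_not_FP_0: "{0} \<notin> fg_FP cex_h1 cex_h2"
proof
  assume "{0} \<in> fg_FP cex_h1 cex_h2"
  then have "fg_tf (fg_restr cex_h1 {0}) (\<lambda>_ _. 0) 0 3 = fg_tf (fg_restr cex_h2 {0}) (\<lambda>_ _. 0) 0 3"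
    by (rule fg_FP_tf_eq) (simp_all add: fm_le_zero)
  moreover have "fg_flow \<lparr>fX = {0}, fE = E, fin = (\<lambda>_ _. 0)\<rparr> 0 = 0"
    if "E 0 0 = (\<lambda>_. 0)" "\<And>y. fm_cont (E 0 y)" for E :: "nat \<Rightarrow> nat \<Rightarrow> enat \<Rightarrow> enat"
    using that fg_flow_eq[OF flow_monoid_enat, of "\<lparr>fX = {0}, fE = E, fin = (\<lambda>_ _. 0)\<rparr>" 0]
    by (simp add: fg_wf_def cex_inx_zero)
  ultimately show False
    by (simp add: fg_tf_restr insert_absorb cex_E_simps cex_cont)
qed

lemma cex_FP_pair_minimal:
  assumes "Z \<in> fg_FP cex_h1 cex_h2" and "Z \<subseteq> {0, a}"
  shows "Z = {0, a}"
proof -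
  have "0 \<in> Z" and "Z \<noteq> {0}"
    using assms(1) cex_FP_contains_0 cex_not_FP_0 by auto
  with assms(2) show ?thesis
    by auto
qed

lemma cex_FP_no_least_minimal:
  "\<not> (\<exists>!Y. Y \<in> fg_FP cex_h1 cex_h2 \<and> (\<forall>Z\<in>fg_FP cex_h1 cex_h2. Z \<subseteq> Y \<longrightarrow> Z = Y))"
proof
  let ?minimal = "\<lambda>Y. Y \<in> fg_FP cex_h1 cex_h2 \<and> (\<forall>Z\<in>fg_FP cex_h1 cex_h2. Z \<subseteq> Y \<longrightarrow> Z = Y)"
  assume unique: "\<exists>!Y. ?minimal Y"
  have "?minimal {0, a}" if "a \<in> {1, 2}" for a
    using cex_FP_pair[OF that] cex_FP_pair_minimal[of _ a] by blast
  then have "(THE Y. ?minimal Y) = {0, 1}" and "(THE Y. ?minimal Y) = {0, 2}"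
    using the1_equality[OF unique] by simp_all
  then have "{0, 1} = ({0, 2} :: nat set)"
    by simp
  then show False
    by (simp add: doubleton_eq_iff)
qed

theorem proposition1:
  shows "(\<forall>(h1 :: 'm::comm_monoid_add fgraph) h2.
            flow_monoid TYPE('m) \<longrightarrow> fg_wf h1 \<longrightarrow> fg_wf h2 \<longrightarrow>
            fX h1 = fX h2 \<longrightarrow> fg_in_eq (fX h1) (fin h1) (fin h2) \<longrightarrow>
            (fg_FP h1 h2 \<noteq> {} \<longleftrightarrow> fX h1 \<in> fg_FP h1 h2))
       \<and> (flow_monoid TYPE(enat) \<and>
          (\<exists>(h1 :: enat fgraph) h2 Y1 Y2.
             fg_wf h1 \<and> fg_wf h2 \<and> fX h1 = fX h2 \<and> fg_in_eq (fX h1) (fin h1) (fin h2) \<and>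
             Y1 \<in> fg_FP h1 h2 \<and> Y2 \<in> fg_FP h1 h2 \<and> Y1 \<inter> Y2 \<notin> fg_FP h1 h2 \<and>
             \<not> (\<exists>!Y. Y \<in> fg_FP h1 h2 \<and> (\<forall>Z\<in>fg_FP h1 h2. Z \<subseteq> Y \<longrightarrow> Z = Y))))"
proof (intro conjI allI impI)
  fix h1 h2 :: "'m fgraph"
  assume "flow_monoid TYPE('m)" "fg_wf h1" "fg_wf h2" "fX h1 = fX h2"
    "fg_in_eq (fX h1) (fin h1) (fin h2)"
  then show "fg_FP h1 h2 \<noteq> {} \<longleftrightarrow> fX h1 \<in> fg_FP h1 h2"
    using fg_FP_imp_full by blast
next
  have "{0, 1} \<inter> {0, 2} = ({0} :: nat set)"
    by auto
  then show "\<exists>(h1 :: enat fgraph) h2 Y1 Y2.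
      fg_wf h1 \<and> fg_wf h2 \<and> fX h1 = fX h2 \<and> fg_in_eq (fX h1) (fin h1) (fin h2) \<and>
      Y1 \<in> fg_FP h1 h2 \<and> Y2 \<in> fg_FP h1 h2 \<and> Y1 \<inter> Y2 \<notin> fg_FP h1 h2 \<and>
      \<not> (\<exists>!Y. Y \<in> fg_FP h1 h2 \<and> (\<forall>Z\<in>fg_FP h1 h2. Z \<subseteq> Y \<longrightarrow> Z = Y))"
    using cex_wf cex_FP_pair[of 1] cex_FP_pair[of 2] cex_not_FP_0 cex_FP_no_least_minimal
    by (intro exI[of _ cex_h1] exI[of _ cex_h2] exI[of _ "{0, 1}"] exI[of _ "{0, 2}"])
      (simp add: fg_in_eq_def)
qed (rule flow_monoid_enat)

end
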